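(* Let $l\in\mathbb N$, $0\le\rho,\delta\le1$, $m\in\mathbb R$, $\tilde m\in\mathbb N_0$, $0<\tau<1$, $M\in\mathbb N_0\cup\{\infty\}$ with $M\ge n+4$, and $a\in C^{\tilde m,\tau}S^m_{\rho,\delta}(\mathbb R^n\times\mathbb R^n;M;\mathscr L(\mathbb C^l))$. Assume that for every $\alpha$ with $|\alpha|\le n+3$ and every $\xi$ the limit $\lim_{|x|\to\infty}\partial_\xi^\alpha a(x,\xi)=\partial_\xi^\alpha a(\infty,\xi)$ exists, where $a(\infty,\xi):=\lim_{|x|\to\infty}a(x,\xi)$, and that $$\sup_{\xi\in\mathbb R^n}\|a(x,\xi)-a(\infty,\xi)\|_{\mathscr L(\mathbb C^l)}\langle\xi\rangle^{-m}\to0\quad(|x|\to\infty).$$ Then for every $\alpha$ with $|\alpha|\le n+2$, $\|\partial_\xi^\alpha a(x,\xi)-\partial_\xi^\alpha a(\infty,\xi)\|_{\mathscr L(\mathbb C^l)}\langle\xi\rangle^{-m+\rho|\alpha|}\to0$ as $|x|\to\infty$, uniformly in $\xi\in\mathbb R^n$.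
   Context: $\langle\xi\rangle=(1+|\xi|^2)^{1/2}$, $\mathscr L(\mathbb C^l)\cong\mathbb C^{l\times l}$. Hölder norm $\|f\|_{C^{\tilde m,\tau}}=\max_{|\beta|\le\tilde m}\big(\sup|\partial^\beta f|+\sup_{x\ne y}|\partial^\beta f(x)-\partial^\beta f(y)|/|x-y|^\tau\big)$. $C^{\tilde m,\tau}S^m_{\rho,\delta}(\mathbb R^n\times\mathbb R^n;M;\mathscr L(\mathbb C^l))$: $a:\mathbb R^{2n}\to\mathbb C^{l\times l}$ with, for $|\beta|\le\tilde m$, $|\alpha|\le M$: $\partial_x^\beta a(x,\cdot)\in C^M$; $\partial_x^\beta\partial_\xi^\alpha a$ continuous; $\|\partial_\xi^\alpha a(x,\xi)\|\le C_\alpha\langle\xi\rangle^{m-\rho|\alpha|}$; $\|\partial_\xi^\alpha a(\cdot,\xi)\|_{C^{\tilde m,\tau}}\le C_\alpha\langle\xi\rangle^{m-\rho|\alpha|+\delta(\tilde m+\tau)}$. *)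

theory Defs
  imports "HOL-Analysis.Analysis" "HOL-Library.Extended_Nat" "HOL-Library.Extended_Real"
begin

definition has_partial :: "'n::finite \<Rightarrow> (real^'n \<Rightarrow> 'b::real_normed_vector) \<Rightarrow> real^'n \<Rightarrow> bool" where
  "has_partial i f x \<longleftrightarrow> (\<lambda>t. f (x + t *\<^sub>R axis i 1)) differentiable (at 0)"

definition partial :: "'n::finite \<Rightarrow> (real^'n \<Rightarrow> 'b::real_normed_vector) \<Rightarrow> real^'n \<Rightarrow> 'b" where
  "partial i f x = vector_derivative (\<lambda>t. f (x + t *\<^sub>R axis i 1)) (at 0)"

text \<open>Iterated partial derivative along a list of directions; a multi-index alpha
  corresponds to any list with count i = alpha i, and |alpha| = length.\<close>

primrec pderivs :: "'n::finite list \<Rightarrow> (real^'n \<Rightarrow> 'b::real_normed_vector) \<Rightarrow> real^'n \<Rightarrow> 'b" where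
  "pderivs [] f = f"
| "pderivs (i # is) f = partial i (pderivs is f)"

definition Ck :: "enat \<Rightarrow> (real^'n::finite \<Rightarrow> 'b::real_normed_vector) \<Rightarrow> bool" where
  "Ck k f \<longleftrightarrow>
     (\<forall>ds. enat (length ds) < k \<longrightarrow> (\<forall>i x. has_partial i (pderivs ds f) x)) \<and>
     (\<forall>ds. enat (length ds) \<le> k \<longrightarrow> continuous_on UNIV (pderivs ds f))"

definition jb :: "real^'n::finite \<Rightarrow> real" where
  "jb \<xi> = sqrt (1 + (norm \<xi>)\<^sup>2)"

text \<open>Operator norm on L(C^l) = l x l complex matrices acting on C^l.\<close>
definition opnorm :: "complex^'l::finite^'l \<Rightarrow> real" where
  "opnorm A = onorm (\<lambda>v::complex^'l. A *v v)"

text \<open>Hoelder norm C^{mt,tau} of a matrix-valued function (extended-real valued,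
  so that it may be infinite).\<close>
definition holder_norm :: "nat \<Rightarrow> real \<Rightarrow> (real^'n::finite \<Rightarrow> complex^'l::finite^'l) \<Rightarrow> ereal" where
  "holder_norm mt \<tau> f =
     (SUP ds \<in> {ds::'n list. length ds \<le> mt}.
        (SUP x. ereal (opnorm (pderivs ds f x))) +
        (SUP p \<in> {(x, y). x \<noteq> y}.
           ereal (opnorm (pderivs ds f (fst p) - pderivs ds f (snd p)) / norm (fst p - snd p) powr \<tau>)))"

text \<open>The symbol class C^{mt,tau} S^m_{rho,delta}(R^n x R^n; M; L(C^l)).
  a x xi is the symbol; derivatives in xi are taken of a x, derivatives in x of
  (\<lambda>y. ... y ...).\<close>
definition symbol_class ::
  "nat \<Rightarrow> real \<Rightarrow> real \<Rightarrow> real \<Rightarrow> real \<Rightarrow> enat \<Rightarrow>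
   (real^'n::finite \<Rightarrow> real^'n \<Rightarrow> complex^'l::finite^'l) \<Rightarrow> bool" where
  "symbol_class mt \<tau> m \<rho> \<delta> M a \<longleftrightarrow>
     (\<forall>bs. length bs \<le> mt \<longrightarrow> (\<forall>x. Ck M (\<lambda>\<xi>. pderivs bs (\<lambda>y. a y \<xi>) x))) \<and>
     (\<forall>bs as. length bs \<le> mt \<longrightarrow> enat (length as) \<le> M \<longrightarrow>
        continuous_on UNIV (\<lambda>(x, \<xi>). pderivs bs (\<lambda>y. pderivs as (a y) \<xi>) x)) \<and>
     (\<forall>as. enat (length as) \<le> M \<longrightarrow>
        (\<forall>bs i \<xi> x. length bs < mt \<longrightarrow>
            has_partial i (pderivs bs (\<lambda>y. pderivs as (a y) \<xi>)) x) \<and>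
        (\<exists>C. (\<forall>x \<xi>. opnorm (pderivs as (a x) \<xi>) \<le> C * jb \<xi> powr (m - \<rho> * real (length as))) \<and>
             (\<forall>\<xi>. holder_norm mt \<tau> (\<lambda>x. pderivs as (a x) \<xi>)
                    \<le> ereal (C * jb \<xi> powr (m - \<rho> * real (length as) + \<delta> * (real mt + \<tau>))))))"

end

theory Submission imports Defs begin

text \<open>Induction on the order of the \<open>\<xi>\<close>-derivative, one coordinate direction at a time. Let
  \<open>A = \<partial>\<^sup>\<alpha>a(x,\<cdot>) - \<partial>\<^sup>\<alpha>a(\<infinity>,\<cdot>)\<close>; inductively, for every \<open>D > 0\<close> eventually
  \<open>\<parallel>A(\<eta>)\<parallel> \<le> D \<langle>\<eta>\<rangle>^s\<close>, while the symbol estimates give \<open>\<parallel>\<partial>\<^sub>i\<^sup>2 A(\<eta>)\<parallel> \<le> C \<langle>\<eta>\<rangle>^(s - 2\<rho>)\<close>.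
  On the segment from \<open>\<xi>\<close> to \<open>\<xi> + h e\<^sub>i\<close>, the interpolation inequality
  \<open>h \<parallel>g'(0)\<parallel> \<le> \<parallel>g(h)\<parallel> + \<parallel>g(0)\<parallel> + h\<^sup>2 sup \<parallel>g''\<parallel>\<close> with step \<open>h = r \<langle>\<xi>\<rangle>^\<rho> / 2\<close> gives
  \<open>\<parallel>\<partial>\<^sub>i A(\<xi>)\<parallel> \<le> (4D/r + Cr/2) O(\<langle>\<xi>\<rangle>^(s - \<rho>))\<close>, and \<open>D = r\<^sup>2\<close> with \<open>r\<close> small makes
  \<open>\<partial>\<^sub>i A\<close> uniformly \<open>o(\<langle>\<xi>\<rangle>^(s - \<rho>))\<close>. The step is admissible because \<open>\<langle>\<cdot>\<rangle>\<close> is 1-Lipschitz, so it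
  stays within a factor 2 of \<open>\<langle>\<xi>\<rangle>\<close> on the segment, as \<open>h \<le> \<langle>\<xi>\<rangle>/2\<close>.\<close>

lemma norm_derivative_interpolation:
  fixes g g' g'' :: "real \<Rightarrow> 'v::real_normed_vector"
  assumes h: "h > 0"
    and d1: "\<And>t. t \<in> {0..h} \<Longrightarrow> (g has_vector_derivative g' t) (at t)"
    and d2: "\<And>t. t \<in> {0..h} \<Longrightarrow> (g' has_vector_derivative g'' t) (at t)"
    and bd: "\<And>t. t \<in> {0..h} \<Longrightarrow> norm (g'' t) \<le> B"
  shows "h * norm (g' 0) \<le> norm (g h) + norm (g 0) + h * h * B"
proof -
  have B0: "0 \<le> B" using bd[of 0] h by (smt (verit) atLeastAtMost_iff norm_ge_zero)
  have g'_close: "norm (g' t - g' 0) \<le> B * h" if t: "t \<in> {0..h}" for t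
  proof -
    have "norm (g' t - g' 0) \<le> B * norm (t - 0)"
    proof (rule differentiable_bound[where S="{0..h}" and f'="\<lambda>x u. u *\<^sub>R g'' x"])
      show "(g' has_derivative (\<lambda>u. u *\<^sub>R g'' x)) (at x within {0..h})" if "x \<in> {0..h}" for x
        using d2[OF that] has_vector_derivative_at_within has_vector_derivative_def by blast
      show "onorm (\<lambda>u. u *\<^sub>R g'' x) \<le> B" if "x \<in> {0..h}" for x
        using bd[OF that] by (simp add: onorm_scaleR_left onorm_id)
    qed (use t h in auto)
    also have "\<dots> \<le> B * h" using t B0 by (intro mult_left_mono) auto
    finally show ?thesis .
  qed
  define \<phi> where "\<phi> t = g t - t *\<^sub>R g' 0" for t
  have "norm (\<phi> h - \<phi> 0) \<le> (B * h) * norm (h - 0)"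
  proof (rule differentiable_bound[where S="{0..h}" and f'="\<lambda>x u. u *\<^sub>R (g' x - g' 0)"])
    show "(\<phi> has_derivative (\<lambda>u. u *\<^sub>R (g' x - g' 0))) (at x within {0..h})" if "x \<in> {0..h}" for x
    proof -
      have "((\<lambda>t. t *\<^sub>R g' 0) has_vector_derivative g' 0) (at x)"
        using bounded_linear.has_vector_derivative[OF bounded_linear_scaleR_left
            has_vector_derivative_id, of "g' 0" "at x"]
        by simp
      then have "(\<phi> has_vector_derivative (g' x - g' 0)) (at x)"
        unfolding \<phi>_def by (intro has_vector_derivative_diff d1[OF that])
      then show ?thesis
        using has_vector_derivative_at_within has_vector_derivative_def by fastforce
    qed
    show "onorm (\<lambda>u. u *\<^sub>R (g' x - g' 0)) \<le> B * h" if "x \<in> {0..h}" for x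
      using g'_close[OF that] by (simp add: onorm_scaleR_left onorm_id)
  qed (use h in auto)
  moreover have "h *\<^sub>R g' 0 = (g h - g 0) - (\<phi> h - \<phi> 0)" by (simp add: \<phi>_def)
  then have "norm (h *\<^sub>R g' 0) \<le> norm (g h - g 0) + norm (\<phi> h - \<phi> 0)"
    by (simp only: norm_triangle_ineq4)
  moreover have "norm (g h - g 0) \<le> norm (g h) + norm (g 0)" by (rule norm_triangle_ineq4)
  ultimately show ?thesis using h by (simp add: mult.commute mult.left_commute)
qed

lemma jb_ge_1: "1 \<le> jb \<xi>"
  unfolding jb_def by simp

lemma jb_pos: "0 < jb \<xi>"
  using jb_ge_1 by (rule less_le_trans[rotated]) simp

lemma jb_lipschitz: "\<bar>jb \<xi> - jb \<eta>\<bar> \<le> norm (\<xi> - \<eta>)"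
proof -
  have jb_cmod: "jb \<zeta> = cmod (Complex 1 (norm \<zeta>))" for \<zeta> :: "real^'n"
    unfolding jb_def by (simp add: complex_norm)
  have "\<bar>jb \<xi> - jb \<eta>\<bar> \<le> cmod (Complex 1 (norm \<xi>) - Complex 1 (norm \<eta>))"
    unfolding jb_cmod by (rule norm_triangle_ineq3)
  also have "\<dots> = \<bar>norm \<xi> - norm \<eta>\<bar>"
  proof -
    have "Complex 1 (norm \<xi>) - Complex 1 (norm \<eta>) = Complex 0 (norm \<xi> - norm \<eta>)"
      by (simp add: complex_eq_iff)
    then show ?thesis by (simp add: complex_norm)
  qed
  also have "\<dots> \<le> norm (\<xi> - \<eta>)" by (rule norm_triangle_ineq3)
  finally show ?thesis .
qed

lemma powr_le_near:
  fixes v w s :: real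
  assumes "1 \<le> w" "\<bar>v - w\<bar> \<le> w / 2"
  shows "v powr s \<le> 2 powr \<bar>s\<bar> * w powr s"
proof (cases "s \<ge> 0")
  case True
  have "v powr s \<le> (2 * w) powr s"
    using assms True by (intro powr_mono2) (auto simp: abs_if split: if_splits)
  also have "\<dots> = 2 powr \<bar>s\<bar> * w powr s" using True by (simp add: powr_mult)
  finally show ?thesis .
next
  case False
  have "v powr s \<le> (w / 2) powr s"
    using assms False by (intro powr_mono2') (auto simp: abs_if split: if_splits)
  also have "\<dots> = 2 powr \<bar>s\<bar> * w powr s" using False assms
    by (simp add: powr_divide powr_minus_divide divide_simps)
  finally show ?thesis .
qed

lemma has_vector_derivative_partial_along_axis:
  assumes "has_partial i F (\<xi> + t *\<^sub>R axis i 1)"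
  shows "((\<lambda>t. F (\<xi> + t *\<^sub>R axis i 1)) has_vector_derivative partial i F (\<xi> + t *\<^sub>R axis i 1)) (at t)"
proof -
  let ?G = "\<lambda>s. F (\<xi> + t *\<^sub>R axis i 1 + s *\<^sub>R axis i 1)"
  have "(?G has_vector_derivative partial i F (\<xi> + t *\<^sub>R axis i 1)) (at 0)"
    using assms unfolding has_partial_def partial_def by (simp add: vector_derivative_works)
  moreover have "((\<lambda>u. u - t) has_vector_derivative 1) (at t)"
    by (intro derivative_eq_intros) auto
  ultimately have "((?G \<circ> (\<lambda>u. u - t)) has_vector_derivative 1 *\<^sub>R partial i F (\<xi> + t *\<^sub>R axis i 1)) (at t)"
    by (intro vector_diff_chain_at) auto
  moreover have "?G \<circ> (\<lambda>u. u - t) = (\<lambda>t. F (\<xi> + t *\<^sub>R axis i 1))"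
    by (auto simp: o_def algebra_simps)
  ultimately show ?thesis by simp
qed

lemma norm_directional_derivative_interpolation:
  fixes g g' g'' :: "real^'n::finite \<Rightarrow> 'v::real_normed_vector"
  assumes rho: "0 \<le> \<rho>" "\<rho> \<le> 1" and r: "0 < r" "r \<le> 1" and e: "norm e \<le> 1"
    and d1: "\<And>t. ((\<lambda>t. g (\<xi> + t *\<^sub>R e)) has_vector_derivative g' (\<xi> + t *\<^sub>R e)) (at t)"
    and d2: "\<And>t. ((\<lambda>t. g' (\<xi> + t *\<^sub>R e)) has_vector_derivative g'' (\<xi> + t *\<^sub>R e)) (at t)"
    and g_bound: "\<And>\<eta>. norm (g \<eta>) \<le> D * jb \<eta> powr s"
    and g''_bound: "\<And>\<eta>. norm (g'' \<eta>) \<le> C * jb \<eta> powr (s - 2 * \<rho>)"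
  shows "norm (g' \<xi>) \<le>
    (4 * 2 powr \<bar>s\<bar> * D / r + r * 2 powr \<bar>s - 2 * \<rho>\<bar> * C / 2) * jb \<xi> powr (s - \<rho>)"
proof -
  have D0: "0 \<le> D" and C0: "0 \<le> C"
    using g_bound[of \<xi>] g''_bound[of \<xi>] jb_pos[of \<xi>] norm_ge_zero
    by (smt (verit) powr_gt_zero zero_le_mult_iff)+
  define c1 where "c1 = 2 powr \<bar>s\<bar>"
  define c2 where "c2 = 2 powr \<bar>s - 2 * \<rho>\<bar>"
  define w where "w = jb \<xi>"
  define W where "W = w powr \<rho>"
  define Y where "Y = w powr (s - \<rho>)"
  define h where "h = r * W / 2"
  have w1: "1 \<le> w" unfolding w_def by (rule jb_ge_1)
  have W: "0 < W" "W \<le> w"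
    unfolding W_def using w1 rho by (auto intro: order.trans[OF powr_mono[of \<rho> 1 w]])
  have ws: "w powr s = W * Y" and ws2: "w powr (s - 2 * \<rho>) = Y / W"
    unfolding W_def Y_def using w1 by (simp_all add: powr_add[symmetric] powr_diff[symmetric])
  have h: "0 < h" "h \<le> w / 2"
    unfolding h_def using r W by (auto intro: order.trans[OF mult_right_mono[of r 1 W]])
  have near: "\<bar>jb (\<xi> + t *\<^sub>R e) - w\<bar> \<le> w / 2" if "t \<in> {0..h}" for t
  proof -
    have "\<bar>jb (\<xi> + t *\<^sub>R e) - w\<bar> \<le> \<bar>t\<bar> * norm e"
      using jb_lipschitz[of "\<xi> + t *\<^sub>R e" \<xi>] unfolding w_def by simp
    also have "\<dots> \<le> \<bar>t\<bar>" using e by (simp add: mult_left_le)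
    finally show ?thesis using that h by auto
  qed
  have g_near: "norm (g (\<xi> + t *\<^sub>R e)) \<le> D * c1 * (W * Y)" if "t \<in> {0..h}" for t
    using order.trans[OF g_bound mult_left_mono[OF powr_le_near[OF w1 near[OF that]] D0]]
    by (simp add: c1_def ws mult.assoc)
  have g''_near: "norm (g'' (\<xi> + t *\<^sub>R e)) \<le> C * c2 * (Y / W)" if "t \<in> {0..h}" for t
    using order.trans[OF g''_bound mult_left_mono[OF powr_le_near[OF w1 near[OF that]] C0]]
    by (simp add: c2_def ws2 mult.assoc)
  have "h * norm (g' \<xi>) \<le> norm (g (\<xi> + h *\<^sub>R e)) + norm (g \<xi>) + h * h * (C * c2 * (Y / W))"
    using norm_derivative_interpolation[OF h(1) d1 d2 g''_near] by simp
  also have "\<dots> \<le> 2 * (D * c1 * (W * Y)) + h * h * (C * c2 * (Y / W))"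
    using g_near[of h] g_near[of 0] h by simp
  also have "\<dots> = h * ((4 * c1 * D / r + r * c2 * C / 2) * Y)"
    unfolding h_def using W r by (simp add: field_simps)
  finally show ?thesis
    using h by (simp add: c1_def c2_def Y_def w_def mult_le_cancel_left_pos)
qed

lemma bounded_linear_matrix_vector_mult_left:
  "bounded_linear (\<lambda>A::complex^'m::finite^'k::finite. A *v v)"
proof -
  have "linear (\<lambda>A::complex^'m^'k. A *v v)"
  proof (rule linearI)
    show "(A + B) *v v = A *v v + B *v v" for A B :: "complex^'m^'k"
      by (simp add: matrix_vector_mult_add_rdistrib)
    show "(c *\<^sub>R A) *v v = c *\<^sub>R (A *v v)" for c and A :: "complex^'m^'k"
      by (simp add: vec_eq_iff matrix_vector_mult_def scaleR_sum_right mult_scaleR_left)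
  qed
  then show ?thesis by (simp add: linear_conv_bounded_linear)
qed

lemma opnorm_nonneg: "0 \<le> opnorm A"
  unfolding opnorm_def by (rule onorm_pos_le[OF matrix_vector_mul_bounded_linear])

lemma norm_matrix_vector_mult_le_opnorm: "norm (A *v v) \<le> opnorm A * norm v"
  unfolding opnorm_def by (rule onorm[OF matrix_vector_mul_bounded_linear])

lemma opnorm_le: "0 \<le> b \<Longrightarrow> (\<And>v. norm (A *v v) \<le> b * norm v) \<Longrightarrow> opnorm A \<le> b"
  unfolding opnorm_def by (rule onorm_bound)

lemma opnorm_diff_le: "opnorm (A - B) \<le> opnorm A + opnorm B"
proof (rule opnorm_le)
  show "0 \<le> opnorm A + opnorm B" using opnorm_nonneg[of A] opnorm_nonneg[of B] by simp
  fix v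
  have "norm ((A - B) *v v) \<le> norm (A *v v) + norm (B *v v)"
    by (simp add: matrix_vector_mult_diff_rdistrib norm_triangle_ineq4)
  also have "\<dots> \<le> (opnorm A + opnorm B) * norm v"
    using norm_matrix_vector_mult_le_opnorm[of A v] norm_matrix_vector_mult_le_opnorm[of B v]
    by (simp add: distrib_right)
  finally show "norm ((A - B) *v v) \<le> (opnorm A + opnorm B) * norm v" .
qed

lemma opnorm_le_of_tendsto:
  assumes "F \<noteq> bot" "(f \<longlongrightarrow> L) F" "\<And>x. opnorm (f x) \<le> b"
  shows "opnorm L \<le> b"
proof (rule opnorm_le)
  show "0 \<le> b" using opnorm_nonneg assms(3) order_trans by blast
  fix v
  have "((\<lambda>x. f x *v v) \<longlongrightarrow> L *v v) F"
    by (rule bounded_linear.tendsto[OF bounded_linear_matrix_vector_mult_left assms(2)])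
  moreover have "\<forall>\<^sub>F x in F. norm (f x *v v) \<le> b * norm v"
    using assms(3)
    by (intro always_eventually allI order.trans[OF norm_matrix_vector_mult_le_opnorm] mult_right_mono) auto
  ultimately show "norm (L *v v) \<le> b * norm v"
    using assms(1) by (intro Lim_norm_ubound)
qed

lemma opnorm_directional_derivative_interpolation:
  fixes A A' A'' :: "real^'n::finite \<Rightarrow> complex^'l::finite^'l"
  assumes rho: "0 \<le> \<rho>" "\<rho> \<le> 1" and r: "0 < r" "r \<le> 1" and e: "norm e \<le> 1"
    and d1: "\<And>t. ((\<lambda>t. A (\<xi> + t *\<^sub>R e)) has_vector_derivative A' (\<xi> + t *\<^sub>R e)) (at t)"
    and d2: "\<And>t. ((\<lambda>t. A' (\<xi> + t *\<^sub>R e)) has_vector_derivative A'' (\<xi> + t *\<^sub>R e)) (at t)"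
    and A_bound: "\<And>\<eta>. opnorm (A \<eta>) \<le> D * jb \<eta> powr s"
    and A''_bound: "\<And>\<eta>. opnorm (A'' \<eta>) \<le> C * jb \<eta> powr (s - 2 * \<rho>)"
  shows "opnorm (A' \<xi>) \<le>
    (4 * 2 powr \<bar>s\<bar> * D / r + r * 2 powr \<bar>s - 2 * \<rho>\<bar> * C / 2) * jb \<xi> powr (s - \<rho>)"
proof (rule opnorm_le)
  have "0 \<le> D" and "0 \<le> C"
    using A_bound[of \<xi>] A''_bound[of \<xi>] jb_pos[of \<xi>] opnorm_nonneg
    by (smt (verit) powr_gt_zero zero_le_mult_iff)+
  then show "0 \<le> (4 * 2 powr \<bar>s\<bar> * D / r + r * 2 powr \<bar>s - 2 * \<rho>\<bar> * C / 2) * jb \<xi> powr (s - \<rho>)"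
    using r by simp
  fix v
  have mult_v: "norm (B \<eta> *v v) \<le> K * jb \<eta> powr p * norm v"
    if "\<And>\<eta>. opnorm (B \<eta>) \<le> K * jb \<eta> powr p" for B :: "real^'n \<Rightarrow> complex^'l^'l" and K p \<eta>
    by (rule order.trans[OF norm_matrix_vector_mult_le_opnorm mult_right_mono[OF that]]) simp
  have "norm (A' \<xi> *v v) \<le> (4 * 2 powr \<bar>s\<bar> * (D * norm v) / r
      + r * 2 powr \<bar>s - 2 * \<rho>\<bar> * (C * norm v) / 2) * jb \<xi> powr (s - \<rho>)"
  proof (rule norm_directional_derivative_interpolation[OF rho r e])
    show "((\<lambda>t. A (\<xi> + t *\<^sub>R e) *v v) has_vector_derivative A' (\<xi> + t *\<^sub>R e) *v v) (at t)" for t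
      by (rule bounded_linear.has_vector_derivative[OF bounded_linear_matrix_vector_mult_left d1])
    show "((\<lambda>t. A' (\<xi> + t *\<^sub>R e) *v v) has_vector_derivative A'' (\<xi> + t *\<^sub>R e) *v v) (at t)" for t
      by (rule bounded_linear.has_vector_derivative[OF bounded_linear_matrix_vector_mult_left d2])
  qed (use mult_v[OF A_bound] mult_v[OF A''_bound] in \<open>simp_all add: algebra_simps\<close>)
  then show "norm (A' \<xi> *v v) \<le>
      (4 * 2 powr \<bar>s\<bar> * D / r + r * 2 powr \<bar>s - 2 * \<rho>\<bar> * C / 2) * jb \<xi> powr (s - \<rho>) * norm v"
    by (simp add: algebra_simps)
qed

lemma mult_powr_minus_le_iff:
  fixes y :: real
  assumes "0 < y"
  shows "X * y powr (- s) \<le> d \<longleftrightarrow> X \<le> d * y powr s"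
  using assms by (simp add: powr_minus field_simps)

definition vanishes_uniformly ::
  "'x filter \<Rightarrow> real \<Rightarrow> ('x \<Rightarrow> real^'n::finite \<Rightarrow> complex^'l::finite^'l) \<Rightarrow> bool" where
  "vanishes_uniformly F s A \<longleftrightarrow> (\<forall>\<epsilon>>0. \<forall>\<^sub>F x in F. \<forall>\<xi>. opnorm (A x \<xi>) * jb \<xi> powr (- s) \<le> \<epsilon>)"

lemma vanishes_uniformly_derivative:
  fixes A A' A'' :: "'x \<Rightarrow> real^'n::finite \<Rightarrow> complex^'l::finite^'l"
  assumes rho: "0 \<le> \<rho>" "\<rho> \<le> 1"
    and vanish: "vanishes_uniformly F s A"
    and d1: "\<And>x \<eta> t. ((\<lambda>t. A x (\<eta> + t *\<^sub>R axis i 1)) has_vector_derivative A' x (\<eta> + t *\<^sub>R axis i 1)) (at t)"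
    and d2: "\<And>x \<eta> t. ((\<lambda>t. A' x (\<eta> + t *\<^sub>R axis i 1)) has_vector_derivative A'' x (\<eta> + t *\<^sub>R axis i 1)) (at t)"
    and A''_bound: "\<And>x \<eta>. opnorm (A'' x \<eta>) \<le> C * jb \<eta> powr (s - 2 * \<rho>)"
  shows "vanishes_uniformly F (s - \<rho>) A'"
  unfolding vanishes_uniformly_def
proof (intro allI impI)
  fix \<epsilon> :: real
  assume \<epsilon>: "\<epsilon> > 0"
  have C0: "0 \<le> C"
    using A''_bound[of undefined 0] jb_pos[of 0] opnorm_nonneg
    by (smt (verit) powr_gt_zero zero_le_mult_iff)
  define K where "K = 4 * 2 powr \<bar>s\<bar> + 2 powr \<bar>s - 2 * \<rho>\<bar> * C / 2"
  define r where "r = min 1 (\<epsilon> / (K + 1))"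
  have K0: "0 \<le> K" unfolding K_def using C0 by simp
  have r: "0 < r" "r \<le> 1" unfolding r_def using \<epsilon> K0 by auto
  have rK: "r * K \<le> \<epsilon>"
  proof -
    have "r * K \<le> \<epsilon> / (K + 1) * K" unfolding r_def using K0 by (intro mult_right_mono) auto
    also have "\<dots> \<le> \<epsilon>" using \<epsilon> K0 by (simp add: field_simps)
    finally show ?thesis .
  qed
  have "\<forall>\<^sub>F x in F. \<forall>\<eta>. opnorm (A x \<eta>) * jb \<eta> powr (- s) \<le> r\<^sup>2"
    using vanish r unfolding vanishes_uniformly_def by simp
  then show "\<forall>\<^sub>F x in F. \<forall>\<xi>. opnorm (A' x \<xi>) * jb \<xi> powr (- (s - \<rho>)) \<le> \<epsilon>"
  proof (rule eventually_mono, intro allI)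
    fix x \<xi>
    assume "\<forall>\<eta>. opnorm (A x \<eta>) * jb \<eta> powr (- s) \<le> r\<^sup>2"
    then have A_bound: "opnorm (A x \<eta>) \<le> r\<^sup>2 * jb \<eta> powr s" for \<eta>
      using mult_powr_minus_le_iff[OF jb_pos] by blast
    have "opnorm (A' x \<xi>) \<le> (4 * 2 powr \<bar>s\<bar> * r\<^sup>2 / r + r * 2 powr \<bar>s - 2 * \<rho>\<bar> * C / 2) * jb \<xi> powr (s - \<rho>)"
      by (rule opnorm_directional_derivative_interpolation[OF rho r _ d1 d2 A_bound A''_bound]) simp
    also have "\<dots> = r * K * jb \<xi> powr (s - \<rho>)"
      unfolding K_def using r by (simp add: power2_eq_square field_simps)
    also have "\<dots> \<le> \<epsilon> * jb \<xi> powr (s - \<rho>)"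
      using rK by (intro mult_right_mono) auto
    finally show "opnorm (A' x \<xi>) * jb \<xi> powr (- (s - \<rho>)) \<le> \<epsilon>"
      using mult_powr_minus_le_iff[OF jb_pos] by blast
  qed
qed

lemma vanishes_uniformly_pderivs:
  fixes a :: "'x \<Rightarrow> real^'n::finite \<Rightarrow> complex^'l::finite^'l" and b :: "real^'n \<Rightarrow> complex^'l^'l"
    and \<rho> m :: real
  assumes rho: "0 \<le> \<rho>" "\<rho> \<le> 1"
    and a_partial: "\<And>as i x \<eta>. length as < N + 1 \<Longrightarrow> has_partial i (pderivs as (a x)) \<eta>"
    and b_partial: "\<And>as i \<eta>. length as < N + 1 \<Longrightarrow> has_partial i (pderivs as b) \<eta>"
    and bound: "\<And>as. length as \<le> N + 1 \<Longrightarrow> \<exists>C. \<forall>x \<eta>.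
      opnorm (pderivs as (a x) \<eta> - pderivs as b \<eta>) \<le> C * jb \<eta> powr (m - \<rho> * real (length as))"
    and vanish: "vanishes_uniformly F m (\<lambda>x \<xi>. a x \<xi> - b \<xi>)"
    and len: "length as \<le> N"
  shows "vanishes_uniformly F (m - \<rho> * real (length as)) (\<lambda>x \<xi>. pderivs as (a x) \<xi> - pderivs as b \<xi>)"
  using len
proof (induction as)
  case Nil
  then show ?case using vanish by simp
next
  case (Cons i as)
  define s where "s = m - \<rho> * real (length as)"
  obtain C where C: "\<And>x \<eta>. opnorm (pderivs (i # i # as) (a x) \<eta> - pderivs (i # i # as) b \<eta>)
      \<le> C * jb \<eta> powr (s - 2 * \<rho>)"
    using bound[of "i # i # as"] Cons.prems unfolding s_def by (auto simp: algebra_simps)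
  have line_derivative: "((\<lambda>t. pderivs bs (a x) (\<eta> + t *\<^sub>R axis i 1) - pderivs bs b (\<eta> + t *\<^sub>R axis i 1))
      has_vector_derivative
      pderivs (i # bs) (a x) (\<eta> + t *\<^sub>R axis i 1) - pderivs (i # bs) b (\<eta> + t *\<^sub>R axis i 1)) (at t)"
    if "length bs < N + 1" for bs x \<eta> t
    unfolding pderivs.simps(2)
    by (intro has_vector_derivative_diff has_vector_derivative_partial_along_axis
        a_partial b_partial that)
  have "vanishes_uniformly F (s - \<rho>) (\<lambda>x \<xi>. pderivs (i # as) (a x) \<xi> - pderivs (i # as) b \<xi>)"
    using Cons by (intro vanishes_uniformly_derivative[OF rho _ line_derivative line_derivative C])
      (auto simp: s_def)
  then show ?case by (simp add: s_def algebra_simps)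
qed

lemma symbol_class_has_partial:
  assumes "symbol_class mt \<tau> m \<rho> \<delta> M a" "enat (length as) < M"
  shows "has_partial i (pderivs as (a x)) \<xi>"
proof -
  have "Ck M (a x)"
    using assms(1) unfolding symbol_class_def by (auto dest!: conjunct1 spec[of _ "[]"])
  then show ?thesis
    using assms(2) unfolding Ck_def by blast
qed

lemma symbol_class_bound_minus_limit:
  fixes a :: "real^'n::finite \<Rightarrow> real^'n \<Rightarrow> complex^'l::finite^'l"
  assumes "symbol_class mt \<tau> m \<rho> \<delta> M a" "enat (length as) \<le> M"
    and lim: "\<And>\<xi>. ((\<lambda>x. pderivs as (a x) \<xi>) \<longlongrightarrow> b \<xi>) at_infinity"
  shows "\<exists>C. \<forall>x \<xi>. opnorm (pderivs as (a x) \<xi> - b \<xi>) \<le> C * jb \<xi> powr (m - \<rho> * real (length as))"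
proof -
  obtain C where C: "\<And>x \<xi>. opnorm (pderivs as (a x) \<xi>) \<le> C * jb \<xi> powr (m - \<rho> * real (length as))"
    using assms(1,2) unfolding symbol_class_def by blast
  have b_bound: "opnorm (b \<xi>) \<le> C * jb \<xi> powr (m - \<rho> * real (length as))" for \<xi>
    using opnorm_le_of_tendsto[OF _ lim C] trivial_limit_at_infinity by blast
  have "opnorm (pderivs as (a x) \<xi> - b \<xi>) \<le> (C + C) * jb \<xi> powr (m - \<rho> * real (length as))" for x \<xi>
    unfolding distrib_right using opnorm_diff_le[of "pderivs as (a x) \<xi>" "b \<xi>"] C[of x \<xi>] b_bound[of \<xi>] by linarith
  then show ?thesis by blast
qed

theorem mainTheorem14:
  fixes a :: "real^'n::finite \<Rightarrow> real^'n \<Rightarrow> complex^'l::finite^'l"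
    and a_inf :: "real^'n \<Rightarrow> complex^'l^'l"
    and \<rho> \<delta> m \<tau> :: real and mt :: nat and M :: enat
  assumes "0 \<le> \<rho>" "\<rho> \<le> 1" "0 \<le> \<delta>" "\<delta> \<le> 1" "0 < \<tau>" "\<tau> < 1"
    and "M \<ge> enat (CARD('n) + 4)"
    and "symbol_class mt \<tau> m \<rho> \<delta> M a"
    and "\<And>\<xi>. ((\<lambda>x. a x \<xi>) \<longlongrightarrow> a_inf \<xi>) at_infinity"
    and "\<And>as i \<xi>. length as < CARD('n) + 3 \<Longrightarrow> has_partial i (pderivs as a_inf) \<xi>"
    and "\<And>as \<xi>. length as \<le> CARD('n) + 3 \<Longrightarrow>
           ((\<lambda>x. pderivs as (a x) \<xi>) \<longlongrightarrow> pderivs as a_inf \<xi>) at_infinity"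
    and "\<And>\<epsilon>. \<epsilon> > 0 \<Longrightarrow> \<forall>\<^sub>F x in at_infinity.
           \<forall>\<xi>. opnorm (a x \<xi> - a_inf \<xi>) * jb \<xi> powr (- m) \<le> \<epsilon>"
  shows "\<forall>as. length as \<le> CARD('n) + 2 \<longrightarrow> (\<forall>\<epsilon>>0. \<forall>\<^sub>F x in at_infinity.
           \<forall>\<xi>. opnorm (pderivs as (a x) \<xi> - pderivs as a_inf \<xi>)
                  * jb \<xi> powr (- m + \<rho> * real (length as)) \<le> \<epsilon>)"
proof (rule allI, rule impI)
  fix as :: "'n list"
  assume len: "length as \<le> CARD('n) + 2"
  have order_lt_M: "enat k < M" if "k < CARD('n) + 4" for k
    using that assms(7) by (meson enat_ord_simps(2) order_less_le_trans)
  have "vanishes_uniformly at_infinity (m - \<rho> * real (length as))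
      (\<lambda>x \<xi>. pderivs as (a x) \<xi> - pderivs as a_inf \<xi>)"
  proof (rule vanishes_uniformly_pderivs[OF assms(1,2) _ assms(10) _ _ len])
    show "has_partial i (pderivs bs (a x)) \<eta>" if "length bs < CARD('n) + 2 + 1" for bs i x \<eta>
      using that by (intro symbol_class_has_partial[OF assms(8)] order_lt_M) simp
    show "\<exists>C. \<forall>x \<eta>. opnorm (pderivs bs (a x) \<eta> - pderivs bs a_inf \<eta>)
        \<le> C * jb \<eta> powr (m - \<rho> * real (length bs))" if "length bs \<le> CARD('n) + 2 + 1" for bs
      using that by (intro symbol_class_bound_minus_limit[OF assms(8) less_imp_le[OF order_lt_M]]
          assms(11)) simp_all
    show "vanishes_uniformly at_infinity m (\<lambda>x \<xi>. a x \<xi> - a_inf \<xi>)"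
      using assms(12) unfolding vanishes_uniformly_def by blast
  qed (use assms(10) in simp)
  then show "\<forall>\<epsilon>>0. \<forall>\<^sub>F x in at_infinity. \<forall>\<xi>. opnorm (pderivs as (a x) \<xi> - pderivs as a_inf \<xi>)
      * jb \<xi> powr (- m + \<rho> * real (length as)) \<le> \<epsilon>"
    unfolding vanishes_uniformly_def by simp
qed

end
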